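(* For all integers $m\ge 2$ and $r\ge 1$, $$U_m h_r=\sum_{i=1}^{r}\alpha_{m,r}(i)\,h_i .$$
   Context: For integers $m\ge2$, $r\ge1$, the numbers $\alpha_{m,r}(1),\ldots,\alpha_{m,r}(r)$ are the unique integers such that $\binom{mn+r-1}{r}=\sum_{i=1}^{r}\alpha_{m,r}(i)\binom{n+i-1}{i}$ for all positive integers $n$. For $r\ge 0$, $h_r(q):=\dfrac{q}{(1-q)^{r+1}}\in\mathbb{Z}[[q]]$. For $m\ge 2$, $U_m:\mathbb{Z}[[q]]\to\mathbb{Z}[[q]]$ is the linear operator $U_m\big(\sum_{n\ge0}a(n)q^n\big)=\sum_{n\ge0}a(mn)q^n$. *)

theory Defs
  imports "HOL-Computational_Algebra.Formal_Power_Series"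
begin

definition alpha :: "nat \<Rightarrow> nat \<Rightarrow> nat \<Rightarrow> int" where
  "alpha m r = (THE a. (\<forall>i. i \<notin> {1..r} \<longrightarrow> a i = 0) \<and>
     (\<forall>n::nat. n > 0 \<longrightarrow>
        int ((m*n + r - 1) choose r) = (\<Sum>i=1..r. a i * int ((n + i - 1) choose i))))"

definition h :: "nat \<Rightarrow> int fps" where
  "h r = (THE f. (1 - fps_X) ^ (r + 1) * f = fps_X)"

definition U :: "nat \<Rightarrow> int fps \<Rightarrow> int fps" where
  "U m f = Abs_fps (\<lambda>n. fps_nth f (m * n))"

end

theory Submission
  imports Defs
begin

text \<open>
  Multiplication by (1-q)^(r+1) sends h_i to q (1-q)^(r-i), so it identifies the span of
  h_1, ..., h_r with q times the polynomials of degree < r, in which the powers (1-q)^j, j < r,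
  form a basis: (1-q)^j has degree j and leading coefficient (-1)^j.
  On the other side U_m (f(q^m) g) = f U_m g for polynomials f, and 1 - q^m = (1-q)(1 + ... + q^(m-1)),
  so (1-q)^(r+1) U_m h_r = U_m (q (1 + ... + q^(m-1))^(r+1)), which is again q times a polynomial
  of degree < r. Hence U_m h_r is a unique integral combination of h_1, ..., h_r, and comparing
  the coefficients of q^n, namely binom(mn+r-1, r) and binom(n+i-1, i), identifies the
  coefficients with alpha_{m,r}(i).
\<close>

unbundle fps_syntax

lemma fps_mult_nth_eq_0_above:
  fixes f g :: "'a::{comm_monoid_add,mult_zero} fps"
  assumes "\<forall>k>a. f $ k = 0" and "\<forall>k>b. g $ k = 0" and "n > a + b"
  shows "(f * g) $ n = 0"
  unfolding fps_mult_nth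
proof (intro sum.neutral ballI)
  fix i assume "i \<in> {0..n}"
  show "f $ i * g $ (n - i) = 0"
    using assms by (cases "i > a") auto
qed

lemma fps_power_nth_eq_0_above:
  fixes f :: "'a::comm_semiring_1 fps"
  assumes "\<forall>k>a. f $ k = 0" and "n > a * j"
  shows "(f ^ j) $ n = 0"
  using assms(2)
proof (induction j arbitrary: n)
  case (Suc j)
  then show ?case
    using fps_mult_nth_eq_0_above[OF assms(1), of "a * j" "f ^ j" n] by (simp add: add.commute)
qed simp

lemma one_minus_fps_X_times_nth:
  "((1 - fps_X) * f) $ n = f $ n - (if n = 0 then 0 else f $ (n - 1))"
  for f :: "'a::comm_ring_1 fps"
  by (simp add: algebra_simps)

lemma one_minus_fps_X_power_nth_above:
  "n > j \<Longrightarrow> ((1 - fps_X :: 'a::comm_ring_1 fps) ^ j) $ n = 0"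
  by (rule fps_power_nth_eq_0_above[where a = 1]) auto

lemma one_minus_fps_X_power_nth_self:
  "((1 - fps_X :: 'a::comm_ring_1 fps) ^ j) $ j = (-1) ^ j"
proof (induction j)
  case (Suc j)
  then show ?case
    by (simp only: power_Suc one_minus_fps_X_times_nth one_minus_fps_X_power_nth_above) simp
qed simp

lemma fps_eq_sum_one_minus_fps_X_powers:
  fixes f :: "'a::comm_ring_1 fps"
  assumes "\<forall>n\<ge>k. f $ n = 0"
  shows "\<exists>c. f = (\<Sum>j<k. fps_const (c j) * (1 - fps_X) ^ j)"
  using assms
proof (induction k arbitrary: f)
  case 0
  then have "f = 0" by (intro fps_ext) auto
  then show ?case by simp
next
  case (Suc k)
  define d where "d = f $ k * (-1) ^ k"
  have "(f - fps_const d * (1 - fps_X) ^ k) $ n = 0" if "n \<ge> k" for n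
  proof (cases "n = k")
    case True
    then show ?thesis
      by (simp add: d_def one_minus_fps_X_power_nth_self mult.assoc flip: power_mult_distrib)
  next
    case False
    with that Suc.prems show ?thesis by (simp add: one_minus_fps_X_power_nth_above)
  qed
  then obtain c where c: "f - fps_const d * (1 - fps_X) ^ k = (\<Sum>j<k. fps_const (c j) * (1 - fps_X) ^ j)"
    using Suc.IH by blast
  have "f = (\<Sum>j<Suc k. fps_const ((c(k := d)) j) * (1 - fps_X) ^ j)"
    using c by (simp add: algebra_simps)
  then show ?case by blast
qed

lemma sum_one_minus_fps_X_powers_eq_0D:
  fixes c :: "nat \<Rightarrow> 'a::comm_ring_1"
  assumes "(\<Sum>j<k. fps_const (c j) * (1 - fps_X) ^ j) = 0" and "j < k"
  shows "c j = 0"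
  using assms
proof (induction k)
  case (Suc k)
  have "(\<Sum>j<Suc k. fps_const (c j) * (1 - fps_X) ^ j) $ k = c k * (-1) ^ k"
    by (simp add: fps_sum_nth one_minus_fps_X_power_nth_self one_minus_fps_X_power_nth_above)
  with Suc.prems(1) have "c k = 0"
    by (metis fps_zero_nth minus_one_power_iff mult_minus1_right mult_1_right neg_equal_0_iff_equal)
  with Suc show ?case by (auto simp: less_Suc_eq)
qed simp

definition h_series :: "nat \<Rightarrow> 'a::comm_ring_1 fps" where
  "h_series i = Abs_fps (\<lambda>n. if n = 0 then 0 else of_nat ((n - 1 + i) choose i))"

lemma one_minus_fps_X_times_h_series_Suc: "(1 - fps_X) * h_series (Suc i) = h_series i"
proof (rule fps_ext)
  fix n
  show "((1 - fps_X) * h_series (Suc i)) $ n = h_series i $ n"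
    by (cases n; cases "n - 1") (simp_all add: one_minus_fps_X_times_nth h_series_def)
qed

lemma one_minus_fps_X_power_times_h_series: "(1 - fps_X) ^ (i + 1) * h_series i = fps_X"
proof (induction i)
  case 0
  show ?case by (intro fps_ext) (simp add: one_minus_fps_X_times_nth h_series_def)
next
  case (Suc i)
  have "(1 - fps_X) ^ (Suc i + 1) * h_series (Suc i)
      = (1 - fps_X) ^ (i + 1) * ((1 - fps_X) * h_series (Suc i) :: 'a fps)"
    by (simp only: add_Suc power_Suc2 mult.assoc)
  also have "\<dots> = fps_X"
    by (simp only: one_minus_fps_X_times_h_series_Suc Suc.IH)
  finally show ?case .
qed

lemma one_minus_fps_X_power_neq_0 [simp]: "(1 - fps_X :: 'a::idom fps) ^ k \<noteq> 0"
proof -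
  have "(1 - fps_X :: 'a fps) $ 0 \<noteq> 0" by simp
  then show ?thesis by (metis fps_zero_nth power_not_zero)
qed

lemma h_eq_h_series: "h i = h_series i"
  unfolding h_def
proof (rule the_equality)
  fix f :: "int fps"
  assume "(1 - fps_X) ^ (i + 1) * f = fps_X"
  then have "(1 - fps_X) ^ (i + 1) * f = (1 - fps_X) ^ (i + 1) * h_series i"
    by (simp only: one_minus_fps_X_power_times_h_series)
  then show "f = h_series i"
    by (simp only: mult_left_cancel one_minus_fps_X_power_neq_0 not_False_eq_True)
qed (rule one_minus_fps_X_power_times_h_series)

lemma h_times_one_minus_fps_X_power: "h i * (1 - fps_X) ^ (i + 1) = fps_X"
  unfolding h_eq_h_series by (subst mult.commute) (rule one_minus_fps_X_power_times_h_series)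

lemma h_nth: "i \<ge> 1 \<Longrightarrow> h i $ n = of_nat ((n + i - 1) choose i)"
  by (cases n) (auto simp: h_eq_h_series h_series_def)

lemma sum_h_nth:
  "(\<Sum>i=1..r. fps_const (a i) * h i) $ n = (\<Sum>i=1..r. a i * of_nat ((n + i - 1) choose i))"
  by (simp add: fps_sum_nth h_nth)

lemma sum_h_times_one_minus_fps_X_power:
  "(\<Sum>i=1..r. fps_const (a i) * h i) * (1 - fps_X) ^ (r + 1)
     = fps_X * (\<Sum>j<r. fps_const (a (r - j)) * (1 - fps_X) ^ j)"
proof -
  have "(\<Sum>i=1..r. fps_const (a i) * h i) * (1 - fps_X) ^ (r + 1)
      = (\<Sum>i=1..r. fps_const (a i) * (1 - fps_X) ^ (r - i) * (h i * (1 - fps_X) ^ (i + 1)))"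
    unfolding sum_distrib_right
    by (intro sum.cong refl) (simp add: mult_ac flip: power_add)
  also have "\<dots> = fps_X * (\<Sum>i=1..r. fps_const (a i) * (1 - fps_X) ^ (r - i))"
    by (simp only: h_times_one_minus_fps_X_power sum_distrib_left mult_ac)
  also have "(\<Sum>i=1..r. fps_const (a i) * (1 - fps_X) ^ (r - i))
      = (\<Sum>j<r. fps_const (a (r - j)) * (1 - fps_X) ^ j)"
    by (rule sum.reindex_bij_witness[of _ "\<lambda>j. r - j" "\<lambda>i. r - i"]) auto
  finally show ?thesis .
qed

lemma sum_h_eq_imp_coeffs_eq:
  assumes "(\<Sum>i=1..r. fps_const (a i) * h i) = (\<Sum>i=1..r. fps_const (b i) * h i)"
    and "i \<in> {1..r}"
  shows "a i = b i"
proof -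
  have "(\<Sum>i=1..r. fps_const (a i - b i) * h i) = 0"
    using assms(1) by (simp add: left_diff_distrib sum_subtractf flip: fps_const_sub)
  then have "fps_X * (\<Sum>j<r. fps_const (a (r - j) - b (r - j)) * (1 - fps_X) ^ j) = 0"
    using sum_h_times_one_minus_fps_X_power[of "\<lambda>i. a i - b i" r] by simp
  then have "a (r - (r - i)) - b (r - (r - i)) = 0"
    using assms(2) by (intro sum_one_minus_fps_X_powers_eq_0D[of "\<lambda>j. a (r - j) - b (r - j)" r]) auto
  then show ?thesis
    using assms(2) by simp
qed

lemma U_nth [simp]: "U m f $ n = f $ (m * n)"
  by (simp add: U_def)

lemma U_diff: "U m (f - g) = U m f - U m g"
  by (simp add: fps_eq_iff)

lemma U_mult_fps_X_power: "m > 0 \<Longrightarrow> U m (f * fps_X ^ m) = U m f * fps_X"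
  by (simp add: fps_eq_iff fps_X_power_mult_right_nth mult.commute[of fps_X] right_diff_distrib')

lemma U_mult_one_minus_fps_X_power:
  assumes "m > 0"
  shows "U m (f * (1 - fps_X ^ m) ^ k) = U m f * (1 - fps_X) ^ k"
proof (induction k arbitrary: f)
  case (Suc k)
  have "U m (f * (1 - fps_X ^ m) ^ Suc k) = U m (f * (1 - fps_X ^ m)) * (1 - fps_X) ^ k"
    using Suc.IH[of "f * (1 - fps_X ^ m)"] by (simp only: power_Suc mult.assoc)
  also have "U m (f * (1 - fps_X ^ m)) = U m f * (1 - fps_X)"
    using assms by (simp add: right_diff_distrib U_diff U_mult_fps_X_power)
  finally show ?case
    by (simp only: power_Suc mult.assoc)
qed simp

lemma U_h_nth: "r \<ge> 1 \<Longrightarrow> U m (h r) $ n = of_nat ((m * n + r - 1) choose r)"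
  by (simp add: h_nth)

lemma U_fps_X_times_geometric_power_nth_above:
  assumes "m > 0" and "r \<ge> 1" and "n > r"
  shows "U m (fps_X * (\<Sum>j<m. fps_X ^ j) ^ (r + 1)) $ n = 0"
proof -
  have geometric_nth: "(\<Sum>j<m. fps_X ^ j :: int fps) $ k = 0" if "k > m - 1" for k
    using that by (simp add: fps_sum_nth fps_X_power_nth)
  have "(m - 1) * (r + 1) < m * (r + 1) - 1"
    using assms(1,2) by (cases m) auto
  also have "\<dots> \<le> m * n - 1"
    using assms(3) by (intro diff_le_mono mult_le_mono2) simp
  finally have "((\<Sum>j<m. fps_X ^ j) ^ (r + 1)) $ (m * n - 1) = (0 :: int)"
    using geometric_nth by (intro fps_power_nth_eq_0_above[where a = "m - 1"]) auto
  then show ?thesis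
    using assms by simp
qed

lemma U_h_times_one_minus_fps_X_power:
  assumes "m > 0"
  shows "U m (h r) * (1 - fps_X) ^ (r + 1) = U m (fps_X * (\<Sum>j<m. fps_X ^ j) ^ (r + 1))"
proof -
  have "h r * (1 - fps_X ^ m) ^ (r + 1) = (h r * (1 - fps_X) ^ (r + 1)) * (\<Sum>j<m. fps_X ^ j) ^ (r + 1)"
    by (simp only: one_diff_power_eq power_mult_distrib mult.assoc)
  then show ?thesis
    by (simp only: U_mult_one_minus_fps_X_power[OF assms, symmetric] h_times_one_minus_fps_X_power)
qed

lemma U_h_in_span_h:
  assumes "m > 0" and "r \<ge> 1"
  shows "\<exists>a. (\<forall>i. i \<notin> {1..r} \<longrightarrow> a i = 0) \<and> U m (h r) = (\<Sum>i=1..r. fps_const (a i) * h i)"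
proof -
  define Q where "Q = U m (h r) * (1 - fps_X) ^ (r + 1)"
  have Q: "Q = U m (fps_X * (\<Sum>j<m. fps_X ^ j) ^ (r + 1))"
    unfolding Q_def using assms(1) by (rule U_h_times_one_minus_fps_X_power)
  have Q_nth: "Q $ n = 0" if "n = 0 \<or> n > r" for n
  proof (cases "n = 0")
    case True
    then show ?thesis unfolding Q by simp
  next
    case False
    then show ?thesis
      using that assms unfolding Q by (intro U_fps_X_times_geometric_power_nth_above) auto
  qed
  then obtain c where c: "fps_shift 1 Q = (\<Sum>j<r. fps_const (c j) * (1 - fps_X) ^ j)"
    using fps_eq_sum_one_minus_fps_X_powers[of r "fps_shift 1 Q"] by auto
  define a where "a i = (if i \<in> {1..r} then c (r - i) else 0)" for i
  have "(\<Sum>i=1..r. fps_const (a i) * h i) * (1 - fps_X) ^ (r + 1)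
      = fps_X * (\<Sum>j<r. fps_const (c j) * (1 - fps_X) ^ j)"
    unfolding sum_h_times_one_minus_fps_X_power by (intro arg_cong2[of _ _ _ _ "(*)"] sum.cong) (auto simp: a_def)
  also have "\<dots> = Q"
    unfolding c[symmetric] by (rule fps_ext) (simp add: Q_nth)
  finally have "U m (h r) = (\<Sum>i=1..r. fps_const (a i) * h i)"
    unfolding Q_def by (simp only: mult_right_cancel one_minus_fps_X_power_neq_0 not_False_eq_True)
  moreover have "\<forall>i. i \<notin> {1..r} \<longrightarrow> a i = 0"
    by (simp add: a_def)
  ultimately show ?thesis
    by blast
qed

lemma U_h_eq_sum_h_iff:
  assumes "r \<ge> 1"
  shows "U m (h r) = (\<Sum>i=1..r. fps_const (a i) * h i) \<longleftrightarrow>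
    (\<forall>n>0. int ((m * n + r - 1) choose r) = (\<Sum>i=1..r. a i * int ((n + i - 1) choose i)))"
proof -
  have coeff: "U m (h r) $ n = (\<Sum>i=1..r. fps_const (a i) * h i) $ n \<longleftrightarrow>
      int ((m * n + r - 1) choose r) = (\<Sum>i=1..r. a i * int ((n + i - 1) choose i))" for n
    by (simp only: U_h_nth[OF assms] sum_h_nth)
  have "U m (h r) $ 0 = (\<Sum>i=1..r. fps_const (a i) * h i) $ 0"
    using assms by (simp only: U_h_nth[OF assms] sum_h_nth) (simp add: binomial_eq_0)
  then show ?thesis
    unfolding fps_eq_iff coeff[symmetric] by (metis neq0_conv)
qed

lemma alpha_eqI:
  assumes "r \<ge> 1"
    and support: "\<forall>i. i \<notin> {1..r} \<longrightarrow> a i = 0"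
    and expansion: "U m (h r) = (\<Sum>i=1..r. fps_const (a i) * h i)"
  shows "alpha m r = a"
  unfolding alpha_def U_h_eq_sum_h_iff[OF assms(1), symmetric]
proof (rule the_equality)
  fix b
  assume b: "(\<forall>i. i \<notin> {1..r} \<longrightarrow> b i = 0) \<and> U m (h r) = (\<Sum>i=1..r. fps_const (b i) * h i)"
  show "b = a"
  proof
    fix i
    show "b i = a i"
      using b support expansion sum_h_eq_imp_coeffs_eq[of b r a i] by (cases "i \<in> {1..r}") auto
  qed
qed (use support expansion in blast)

theorem lemma2p3:
  fixes m r :: nat
  assumes "m \<ge> 2" and "r \<ge> 1"
  shows "U m (h r) = (\<Sum>i=1..r. fps_const (alpha m r i) * h i)"
proof -
  obtain a where support: "\<forall>i. i \<notin> {1..r} \<longrightarrow> a i = 0"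
    and expansion: "U m (h r) = (\<Sum>i=1..r. fps_const (a i) * h i)"
    using U_h_in_span_h[of m r] assms by auto
  have "alpha m r = a"
    using assms(2) support expansion by (rule alpha_eqI)
  with expansion show ?thesis
    by simp
qed

end
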